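(* Given positive integers $n$ and $g$, there exists an integer $d_0$, depending only on $n$ and $g$, such that for every integer $d>d_0$ and every subgroup $H\subset(\mathbb{Z}/d\mathbb{Z})^\times$ of index $2g$, every coset of $H$ in $(\mathbb{Z}/d\mathbb{Z})^\times$ contains an element whose least nonnegative residue modulo $d$ lies in the open interval $(0,d/n)$. *)

theory Defs
  imports "HOL-Number_Theory.Number_Theory"
begin

text \<open>The unit group (Z/dZ)^* realised as the units of the library residue ring
  on the carrier {0..d-1}; elements are thus least nonnegative residues.\<close>
abbreviation units_mod :: "nat \<Rightarrow> int monoid" where
  "units_mod d \<equiv> units_of (residue_ring (int d))"

end

theory Submission
  imports Defs
begin

text \<open>Let \<open>L = d div (2n + 1)\<close>, so that \<open>x + y < d / n\<close> for \<open>x, y \<in> {1..L}\<close>; it suffices to find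
  such \<open>x, y\<close> with \<open>x + y \<in> C\<close>. Orthogonality of the additive characters mod \<open>d\<close> writes \<open>d\<close> times
  the number of these pairs as \<open>\<Sum>\<^sub>b S\<^sub>J(b)\<^sup>2 conj S\<^sub>C(b)\<close>, where \<open>J = {1..L}\<close>; the term \<open>b = 0\<close>
  is \<open>L\<^sup>2 card C\<close>. Since \<open>C\<close> is invariant under \<open>H\<close>, \<open>S\<^sub>C\<close> is constant on the \<open>card H\<close>
  frequencies \<open>b u\<close>, \<open>u \<in> H\<close>, and Parseval gives \<open>|S\<^sub>C(b)|\<^sup>2 \<le> d gcd(b, d)\<close>. Together with
  Parseval for \<open>J\<close> this bounds the other terms by \<open>L d\<^sup>3\<^sup>/\<^sup>2 \<Sum>\<^sub>c\<^sub>|\<^sub>d c\<^sup>-\<^sup>1\<^sup>/\<^sup>2\<close>, and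
  the divisor sum is \<open>O(d\<^sup>1\<^sup>/\<^sup>4 \<phi>(d) / d)\<close>. As \<open>card C = \<phi>(d) / (2g)\<close>, the main term wins
  once \<open>d\<close> is large in terms of \<open>n\<close> and \<open>g\<close>.\<close>

section \<open>Additive characters and exponential sums\<close>

definition add_char :: "int \<Rightarrow> int \<Rightarrow> complex" where
  "add_char m t = cis (2 * pi * of_int t / of_int m)"

lemma add_char_add: "add_char m (a + b) = add_char m a * add_char m b"
  by (simp add: add_char_def cis_mult add_divide_distrib ring_distribs)

lemma add_char_0 [simp]: "add_char m 0 = 1"
  by (simp add: add_char_def)

lemma add_char_multiple:
  assumes "m \<noteq> 0"
  shows "add_char m (m * k) = 1"
proof -
  have "2 * pi * of_int (m * k) / of_int m = 2 * pi * of_int k"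
    using assms by simp
  moreover have "cis (2 * pi * real_of_int k) = 1"
    by (rule cis_multiple_2pi) simp
  ultimately show ?thesis
    by (simp add: add_char_def)
qed

lemma add_char_cong:
  assumes "m \<noteq> 0" "a mod m = b mod m"
  shows "add_char m a = add_char m b"
proof -
  obtain k where "a - b = m * k"
    using assms(2) by (auto simp: mod_eq_dvd_iff elim: dvdE)
  then have "a = b + m * k"
    by simp
  then show ?thesis
    using assms(1) by (simp add: add_char_add add_char_multiple)
qed

lemma add_char_cnj: "cnj (add_char m t) = add_char m (- t)"
  by (simp add: add_char_def cis_cnj)

lemma add_char_mult_cancel: "c \<noteq> 0 \<Longrightarrow> add_char (c * m) (c * t) = add_char m t"
  by (simp add: add_char_def ac_simps)

lemma add_char_power: "add_char m (int k * t) = add_char m t ^ k"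
  by (simp add: add_char_def DeMoivre mult_ac)

lemma add_char_eq_1_imp_dvd:
  assumes "m \<noteq> 0" "add_char m t = 1"
  shows "m dvd t"
proof -
  have "cos (2 * pi * of_int t / of_int m) = 1"
    using assms(2) by (simp add: add_char_def complex_eq_iff)
  then obtain k :: int where "2 * pi * of_int t / of_int m = of_int k * 2 * pi"
    by (auto simp: cos_one_2pi_int)
  then have "real_of_int t = real_of_int (k * m)"
    using assms(1) by (simp add: field_simps)
  then show ?thesis
    by (simp only: of_int_eq_iff) simp
qed

lemma sum_add_char:
  assumes "m > 0"
  shows "(\<Sum>s\<in>{0..<m}. add_char m (s * z)) = (if m dvd z then of_int m else 0)"
proof (cases "m dvd z")
  case True
  then obtain k where "z = m * k" by blast
  then have "add_char m (s * z) = 1" for s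
    using assms add_char_multiple[of m "s * k"] by (simp add: mult.left_commute)
  then show ?thesis
    using True assms by simp
next
  case False
  define w where "w = add_char m z"
  have "w \<noteq> 1" "w ^ nat m = 1"
    using False add_char_eq_1_imp_dvd[of m z] assms
    by (auto simp: w_def add_char_power[symmetric] add_char_multiple)
  have "{0..<m} = int ` {..<nat m}"
    using assms by (auto simp: image_iff intro!: bexI[of _ "nat _"])
  then have "(\<Sum>s\<in>{0..<m}. add_char m (s * z)) = (\<Sum>k<nat m. w ^ k)"
    by (simp add: sum.reindex w_def add_char_power)
  also have "\<dots> = 0"
    using \<open>w \<noteq> 1\<close> \<open>w ^ nat m = 1\<close> by (simp add: geometric_sum)
  finally show ?thesis
    using False by simp
qed

definition exp_sum :: "int \<Rightarrow> int set \<Rightarrow> int \<Rightarrow> complex" where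
  "exp_sum d A t = (\<Sum>x\<in>A. add_char d (t * x))"

lemma exp_sum_0: "exp_sum d A 0 = of_nat (card A)"
  by (simp add: exp_sum_def)

lemma exp_sum_mod: "d \<noteq> 0 \<Longrightarrow> exp_sum d A (t mod d) = exp_sum d A t"
  unfolding exp_sum_def by (intro sum.cong refl add_char_cong) (auto simp: mod_mult_left_eq)

lemma sum_if_eq_card:
  assumes "finite S"
  shows "(\<Sum>x\<in>S. if P x then (c :: 'a :: semiring_1) else 0) = of_nat (card {x\<in>S. P x}) * c"
  using sum.inter_filter[OF assms, of "\<lambda>_. c" P] by simp

lemma exp_sum_parseval:
  assumes "c > 0" "m > 0" "finite A"
  shows "(\<Sum>s\<in>{0..<m}. (cmod (exp_sum (c * m) A (c * s)))\<^sup>2)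
           = real_of_int m * card {(x, y)\<in>A \<times> A. x mod m = y mod m}"
proof -
  have norm_sq: "complex_of_real ((cmod (exp_sum (c * m) A (c * s)))\<^sup>2)
      = (\<Sum>x\<in>A. \<Sum>y\<in>A. add_char m (s * (x - y)))" for s
  proof -
    have "exp_sum (c * m) A (c * s) = (\<Sum>x\<in>A. add_char m (s * x))"
      using assms(1) by (simp add: exp_sum_def mult.assoc add_char_mult_cancel)
    then have "complex_of_real ((cmod (exp_sum (c * m) A (c * s)))\<^sup>2)
        = (\<Sum>x\<in>A. add_char m (s * x)) * (\<Sum>y\<in>A. add_char m (- (s * y)))"
      by (simp only: complex_norm_square) (simp add: add_char_cnj)
    then show ?thesis
      by (simp add: sum_product add_char_add[symmetric] right_diff_distrib)
  qed
  have "complex_of_real (\<Sum>s\<in>{0..<m}. (cmod (exp_sum (c * m) A (c * s)))\<^sup>2)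
      = (\<Sum>s\<in>{0..<m}. \<Sum>x\<in>A. \<Sum>y\<in>A. add_char m (s * (x - y)))"
    by (simp only: of_real_sum norm_sq)
  also have "\<dots> = (\<Sum>x\<in>A. \<Sum>y\<in>A. \<Sum>s\<in>{0..<m}. add_char m (s * (x - y)))"
    by (simp add: sum.swap[of _ "{0..<m}"])
  also have "\<dots> = (\<Sum>p\<in>A \<times> A. if fst p mod m = snd p mod m then of_int m else 0)"
    using assms(2) by (simp add: sum_add_char mod_eq_dvd_iff sum.cartesian_product case_prod_beta)
  also have "\<dots> = of_int m * of_nat (card {(x, y)\<in>A \<times> A. x mod m = y mod m})"
  proof -
    have "{p\<in>A \<times> A. fst p mod m = snd p mod m} = {(x, y)\<in>A \<times> A. x mod m = y mod m}"
      by auto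
    then show ?thesis
      using assms(3) by (simp add: sum_if_eq_card mult.commute)
  qed
  also have "\<dots> = complex_of_real (real_of_int m * card {(x, y)\<in>A \<times> A. x mod m = y mod m})"
    by simp
  finally show ?thesis
    by (simp only: of_real_eq_iff)
qed

lemma card_residue_class_le:
  fixes A :: "int set"
  assumes m: "m > 0" and A: "A \<subseteq> {a..<a + k * m}"
  shows "card {y\<in>A. y mod m = r} \<le> nat k"
proof -
  let ?q = "\<lambda>y. (y - a) div m"
  have inj: "inj_on ?q {y\<in>A. y mod m = r}"
  proof (rule inj_onI)
    fix x y
    assume "x \<in> {y\<in>A. y mod m = r}" "y \<in> {y\<in>A. y mod m = r}" "?q x = ?q y"
    then have "x mod m = y mod m" "(x - a) div m = (y - a) div m"
      by simp_all
    then have "(x - a) mod m = (y - a) mod m" "(x - a) div m = (y - a) div m"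
      using mod_diff_cong by blast+
    then have "m * ((x - a) div m) + (x - a) mod m = m * ((y - a) div m) + (y - a) mod m"
      by (simp only:)
    then show "x = y"
      by (simp only: mult_div_mod_eq)
  qed
  have image: "?q ` {y\<in>A. y mod m = r} \<subseteq> {0..<k}"
  proof
    fix z assume "z \<in> ?q ` {y\<in>A. y mod m = r}"
    then obtain y where "y \<in> A" "z = ?q y" by auto
    with A have y: "0 \<le> y - a" "y - a < k * m" by auto
    have "(y - a) mod m \<ge> 0"
      using m by simp
    then have "m * ?q y < m * k"
      using y(2) mult_div_mod_eq[of m "y - a"] mult.commute[of k m] by linarith
    then have "?q y < k"
      using m by (simp add: mult_less_cancel_left_pos)
    moreover have "0 \<le> ?q y"
      using m y(1) by (simp add: pos_imp_zdiv_nonneg_iff)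
    ultimately show "z \<in> {0..<k}"
      using \<open>z = ?q y\<close> by simp
  qed
  have "card {y\<in>A. y mod m = r} = card (?q ` {y\<in>A. y mod m = r})"
    using inj by (simp add: card_image)
  also have "\<dots> \<le> card {0..<k}"
    using image by (intro card_mono) simp_all
  finally show ?thesis by simp
qed

lemma card_congruent_pairs_le:
  assumes "finite A" and "\<And>r. card {y\<in>A. y mod m = r} \<le> K"
  shows "card {(x, y)\<in>A \<times> A. x mod m = y mod m} \<le> card A * K"
proof -
  have "{(x, y)\<in>A \<times> A. x mod m = y mod m} = Sigma A (\<lambda>x. {y\<in>A. y mod m = x mod m})"
    by auto
  then have "card {(x, y)\<in>A \<times> A. x mod m = y mod m} = (\<Sum>x\<in>A. card {y\<in>A. y mod m = x mod m})"
    using assms(1) by simp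
  also have "\<dots> \<le> card A * K"
    using sum_bounded_above[of A "\<lambda>x. card {y\<in>A. y mod m = x mod m}" K] assms(2) by simp
  finally show ?thesis .
qed

lemma exp_sum_parseval_le:
  assumes "c > 0" "m > 0" "finite A" and "\<And>r. card {y\<in>A. y mod m = r} \<le> K"
  shows "(\<Sum>s\<in>{0..<m}. (cmod (exp_sum (c * m) A (c * s)))\<^sup>2) \<le> real_of_int m * (card A * K)"
proof -
  have "card {(x, y)\<in>A \<times> A. x mod m = y mod m} \<le> card A * K"
    using assms(3,4) by (rule card_congruent_pairs_le)
  then have "real (card {(x, y)\<in>A \<times> A. x mod m = y mod m}) \<le> real (card A * K)"
    by (rule of_nat_mono)
  then show ?thesis
    using assms(2) exp_sum_parseval[OF assms(1-3)] by (simp add: mult_left_mono)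
qed

lemma exp_sum_interval_parseval_le:
  assumes c: "c > 0" and m: "m > 0" and L: "L \<ge> 0"
  shows "(\<Sum>s\<in>{1..<m}. (cmod (exp_sum (c * m) {1..L} (c * s)))\<^sup>2) \<le> real_of_int (m * L)"
proof -
  have "m * (L div m) + L mod m = L"
    by (rule mult_div_mod_eq)
  moreover have "0 \<le> L mod m" "L mod m < m" "(L div m + 1) * m = m * (L div m) + m"
    using m by (simp_all add: algebra_simps)
  ultimately have L_div: "m * (L div m) \<le> L" "L < (L div m + 1) * m"
    by linarith+
  then have "card {y\<in>{1..L}. y mod m = r} \<le> nat (L div m + 1)" for r
    using m by (intro card_residue_class_le) auto
  then have "(\<Sum>s\<in>{0..<m}. (cmod (exp_sum (c * m) {1..L} (c * s)))\<^sup>2)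
      \<le> real_of_int m * (card {1..L} * nat (L div m + 1))"
    using c m by (intro exp_sum_parseval_le) auto
  also have "\<dots> = real_of_int L * (real_of_int m * real_of_int (L div m + 1))"
    using m L by (simp add: pos_imp_zdiv_nonneg_iff)
  also have "\<dots> \<le> real_of_int L * (real_of_int L + real_of_int m)"
  proof -
    have "real_of_int m * real_of_int (L div m + 1) \<le> real_of_int L + real_of_int m"
      using L_div(1) by (simp add: algebra_simps flip: of_int_mult of_int_le_iff)
    then show ?thesis
      using L by (intro mult_left_mono) auto
  qed
  finally have "(\<Sum>s\<in>{0..<m}. (cmod (exp_sum (c * m) {1..L} (c * s)))\<^sup>2)
      \<le> real_of_int L * (real_of_int L + real_of_int m)" .
  moreover have "{0..<m} = insert 0 {1..<m}"
    using m by auto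
  ultimately show ?thesis
    using L by (simp add: exp_sum_0 algebra_simps power2_eq_square)
qed

lemma mod_div_gcd_eq_if_mult_mod_eq:
  fixes b d u v :: int
  assumes b: "b \<noteq> 0" and e: "(b * u) mod d = (b * v) mod d"
  shows "u mod (d div gcd b d) = v mod (d div gcd b d)"
proof -
  define c where "c = gcd b d"
  define m where "m = d div c"
  have c0: "c > 0" and dc: "d = c * m" and bc: "b = c * (b div c)"
    using b by (simp_all add: c_def m_def)
  have "coprime m (b div c)"
    using b by (simp add: c_def m_def div_gcd_coprime coprime_commute)
  have "d dvd b * u - b * v"
    using e by (simp add: mod_eq_dvd_iff)
  then have "c * m dvd c * ((b div c) * (u - v))"
    using dc bc by (metis mult.assoc right_diff_distrib)
  then have "m dvd (b div c) * (u - v)"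
    using c0 by simp
  then have "m dvd u - v"
    using \<open>coprime m (b div c)\<close> by (simp add: coprime_dvd_mult_right_iff)
  then show ?thesis
    by (simp add: m_def c_def mod_eq_dvd_iff)
qed

lemma card_mult_mod_fiber_le:
  fixes b d :: int
  assumes d: "d > 0" and b: "b \<noteq> 0" and H: "H \<subseteq> {0..<d}"
  shows "card {u\<in>H. (b * u) mod d = t} \<le> nat (gcd b d)"
proof (cases "{u\<in>H. (b * u) mod d = t} = {}")
  case False
  then obtain u0 where u0: "u0 \<in> H" "(b * u0) mod d = t" by auto
  define c where "c = gcd b d"
  define m where "m = d div c"
  have "0 < c" "d = c * m"
    using b by (simp_all add: c_def m_def)
  then have "m > 0"
    using d zero_less_mult_pos[of c m] by simp
  have "{u\<in>H. (b * u) mod d = t} \<subseteq> {u\<in>H. u mod m = u0 mod m}"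
  proof
    fix u assume u: "u \<in> {u\<in>H. (b * u) mod d = t}"
    then have "u mod m = u0 mod m"
      unfolding m_def c_def using b u0(2) by (intro mod_div_gcd_eq_if_mult_mod_eq) auto
    with u show "u \<in> {u\<in>H. u mod m = u0 mod m}" by simp
  qed
  then have "card {u\<in>H. (b * u) mod d = t} \<le> card {u\<in>H. u mod m = u0 mod m}"
    using H by (intro card_mono) (auto intro: finite_subset)
  also have "\<dots> \<le> nat c"
    using H \<open>m > 0\<close> \<open>d = c * m\<close> by (intro card_residue_class_le[of m H 0]) (auto simp: mult.commute)
  finally show ?thesis
    by (simp add: c_def)
next
  case True
  then show ?thesis
    by (metis card.empty zero_le)
qed

lemma sum_fibers_le:
  fixes w :: "'b \<Rightarrow> real"
  assumes "finite A" "finite B" "f ` A \<subseteq> B"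
    and "\<And>t. t \<in> B \<Longrightarrow> real (card {a\<in>A. f a = t}) \<le> K" and "\<And>t. w t \<ge> 0"
  shows "(\<Sum>a\<in>A. w (f a)) \<le> K * (\<Sum>t\<in>B. w t)"
proof -
  have "(\<Sum>a\<in>A. w (f a)) = (\<Sum>t\<in>B. real (card {a\<in>A. f a = t}) * w t)"
    using sum.group[OF assms(1-3), of "\<lambda>a. w (f a)"] by simp
  also have "\<dots> \<le> (\<Sum>t\<in>B. K * w t)"
    using assms(4,5) by (intro sum_mono mult_right_mono) auto
  finally show ?thesis
    by (simp add: sum_distrib_left)
qed

lemma sum_exp_sum_sq_cnj:
  assumes d: "d > 0" and A: "finite A" and C: "C \<subseteq> {0..<d}"
  shows "(\<Sum>b\<in>{0..<d}. exp_sum d A b ^ 2 * cnj (exp_sum d C b))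
           = of_int d * of_nat (card {(x, y)\<in>A \<times> A. (x + y) mod d \<in> C})"
proof -
  have "exp_sum d A b ^ 2 * cnj (exp_sum d C b)
      = (\<Sum>x\<in>A. \<Sum>y\<in>A. \<Sum>z\<in>C. add_char d (b * (x + y - z)))" for b
    by (simp add: exp_sum_def power2_eq_square cnj_sum add_char_cnj sum_product sum_distrib_left
        sum_distrib_right add_char_add[symmetric] algebra_simps)
  then have "(\<Sum>b\<in>{0..<d}. exp_sum d A b ^ 2 * cnj (exp_sum d C b))
      = (\<Sum>x\<in>A. \<Sum>y\<in>A. \<Sum>z\<in>C. \<Sum>b\<in>{0..<d}. add_char d (b * (x + y - z)))"
    by (simp add: sum.swap[of _ "{0..<d}"])
  also have "\<dots> = (\<Sum>x\<in>A. \<Sum>y\<in>A. \<Sum>z\<in>C. if z = (x + y) mod d then of_int d else 0)"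
  proof (intro sum.cong refl)
    fix x y z assume "z \<in> C"
    then have "z mod d = z"
      using C by auto
    then have "d dvd x + y - z \<longleftrightarrow> z = (x + y) mod d"
      by (auto simp: mod_eq_dvd_iff[symmetric])
    then show "(\<Sum>b\<in>{0..<d}. add_char d (b * (x + y - z))) = (if z = (x + y) mod d then of_int d else 0)"
      using d by (simp add: sum_add_char)
  qed
  also have "\<dots> = (\<Sum>p\<in>A \<times> A. if (fst p + snd p) mod d \<in> C then of_int d else 0)"
    using C by (simp add: finite_subset sum.delta sum.cartesian_product case_prod_beta)
  also have "\<dots> = of_int d * of_nat (card {(x, y)\<in>A \<times> A. (x + y) mod d \<in> C})"
  proof -
    have "{p\<in>A \<times> A. (fst p + snd p) mod d \<in> C} = {(x, y)\<in>A \<times> A. (x + y) mod d \<in> C}"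
      by auto
    then show ?thesis
      using A by (simp add: sum_if_eq_card mult.commute)
  qed
  finally show ?thesis .
qed

lemma mult_mod_in_gcd_multiples:
  fixes b d u :: int
  assumes "d > 0"
  shows "(b * u) mod d \<in> (\<lambda>s. gcd b d * s) ` {0..<d div gcd b d}"
proof -
  define c where "c = gcd b d"
  have "c dvd (b * u) mod d"
    by (simp add: c_def dvd_mod)
  then obtain s where s: "(b * u) mod d = c * s"
    by blast
  have "0 < c" "d = c * (d div c)"
    using assms by (simp_all add: c_def)
  moreover have "0 \<le> c * s" "c * s < d"
    using assms s[symmetric] by simp_all
  ultimately have "s \<in> {0..<d div c}"
    by (metis atLeastLessThan_iff mult_less_cancel_left_pos zero_le_mult_iff not_less)
  then show ?thesis
    unfolding s c_def by (rule imageI)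
qed

lemma multiples_in_range_eq_image:
  fixes c m :: int
  assumes c: "c > 0"
  shows "{b\<in>{1..<c * m}. c dvd b} = (\<lambda>s. c * s) ` {1..<m}"
proof (intro equalityI subsetI)
  fix b assume b: "b \<in> {b\<in>{1..<c * m}. c dvd b}"
  then obtain s where s: "b = c * s"
    by blast
  then have "0 < c * s" "c * s < c * m"
    using b by simp_all
  then have "0 < s" "s < m"
    using c by (simp_all add: zero_less_mult_iff)
  then show "b \<in> (\<lambda>s. c * s) ` {1..<m}"
    unfolding s by (intro imageI) simp
next
  fix b assume "b \<in> (\<lambda>s. c * s) ` {1..<m}"
  then obtain s where s: "b = c * s" "s \<in> {1..<m}"
    by (rule imageE)
  have "1 * 1 \<le> c * s"
    using c s(2) by (intro mult_mono) auto
  moreover have "c * s < c * m"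
    using c s(2) by simp
  ultimately show "b \<in> {b\<in>{1..<c * m}. c dvd b}"
    using s by simp
qed

lemma sum_exp_sum_interval_multiples_le:
  fixes c d L :: int
  assumes c: "c > 0" "c dvd d" and d: "d > 0" and L: "L \<ge> 0"
  shows "(\<Sum>b\<in>{b\<in>{1..<d}. c dvd b}. (cmod (exp_sum d {1..L} b))\<^sup>2) \<le> real_of_int (d div c * L)"
proof -
  define m where "m = d div c"
  have dm: "d = c * m"
    using c by (simp add: m_def)
  have "0 < c * m"
    using d by (simp add: dm)
  then have m: "m > 0"
    using c by (simp add: zero_less_mult_iff)
  have "(\<Sum>b\<in>{b\<in>{1..<d}. c dvd b}. (cmod (exp_sum d {1..L} b))\<^sup>2)
      = (\<Sum>s\<in>{1..<m}. (cmod (exp_sum (c * m) {1..L} (c * s)))\<^sup>2)"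
    unfolding dm multiples_in_range_eq_image[OF c(1)]
    using c by (subst sum.reindex) (auto simp: inj_on_def)
  also have "\<dots> \<le> real_of_int (m * L)"
    using c m L by (intro exp_sum_interval_parseval_le)
  finally show ?thesis
    by (simp add: m_def)
qed

lemma sum_gcd_le_sum_divisors:
  fixes d :: int and f v :: "int \<Rightarrow> real"
  assumes d: "d > 0" and f: "\<And>c. c > 0 \<Longrightarrow> f c \<ge> 0" and v: "\<And>b. v b \<ge> 0"
  shows "(\<Sum>b\<in>{1..<d}. f (gcd b d) * v b)
           \<le> (\<Sum>c\<in>{c. 0 < c \<and> c dvd d \<and> c < d}. f c * (\<Sum>b\<in>{b\<in>{1..<d}. c dvd b}. v b))"
proof -
  define G where "G = {c. 0 < c \<and> c dvd d \<and> c < d}"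
  have "finite G"
    by (rule finite_subset[of _ "{0..d}"]) (auto simp: G_def)
  have "gcd b d \<in> G" if "b \<in> {1..<d}" for b
  proof -
    have b: "1 \<le> b" "b < d"
      using that by simp_all
    then have "gcd b d \<le> b"
      by (simp add: gcd_le1_int)
    with b have "gcd b d < d"
      by linarith
    with b show ?thesis
      by (auto simp: G_def)
  qed
  then have "(\<Sum>b\<in>{1..<d}. f (gcd b d) * v b) = (\<Sum>c\<in>G. \<Sum>b\<in>{b\<in>{1..<d}. gcd b d = c}. f c * v b)"
    using \<open>finite G\<close> by (subst sum.group[symmetric]) (auto intro!: sum.cong)
  also have "\<dots> \<le> (\<Sum>c\<in>G. f c * (\<Sum>b\<in>{b\<in>{1..<d}. c dvd b}. v b))"
    unfolding sum_distrib_left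
    using f v by (intro sum_mono sum_mono2) (auto simp: G_def intro: finite_subset[of _ "{1..<d}"])
  finally show ?thesis
    by (simp add: G_def)
qed

lemma sqrt_mult_mult_div_eq:
  fixes c d L :: int
  assumes "c > 0" "c dvd d"
  shows "sqrt (real_of_int (d * c)) * real_of_int (d div c * L)
           = real_of_int L * real_of_int d * sqrt (real_of_int d) * (1 / sqrt (real_of_int c))"
proof -
  define s where "s = sqrt (real_of_int c)"
  have "real_of_int (d div c) = real_of_int d / real_of_int c"
    using assms by (simp add: real_of_int_div)
  moreover have "real_of_int c = s * s" "s > 0"
    using assms(1) by (simp_all add: s_def)
  ultimately have "s * real_of_int (d div c) = real_of_int d / s"
    by (simp add: field_simps)
  have "sqrt (real_of_int (d * c)) * real_of_int (d div c * L)
      = sqrt (real_of_int d) * (s * real_of_int (d div c)) * real_of_int L"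
    by (simp add: s_def real_sqrt_mult mult.assoc)
  also have "\<dots> = real_of_int L * real_of_int d * sqrt (real_of_int d) * (1 / s)"
    by (simp add: \<open>s * real_of_int (d div c) = real_of_int d / s\<close>)
  finally show ?thesis
    by (simp add: s_def)
qed

section \<open>The divisor sum \<open>\<Sum>\<^sub>c\<^sub>|\<^sub>d c\<^sup>-\<^sup>1\<^sup>/\<^sup>2\<close>\<close>

definition inv_sqrt_divisor_sum :: "nat \<Rightarrow> real" where
  "inv_sqrt_divisor_sum n = (\<Sum>c | c dvd n. 1 / sqrt (real c))"

lemma inv_sqrt_divisor_sum_nonneg: "inv_sqrt_divisor_sum n \<ge> 0"
  unfolding inv_sqrt_divisor_sum_def by (intro sum_nonneg) simp

lemma sum_proper_divisors_le_inv_sqrt_divisor_sum: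
  fixes d :: int
  assumes "d > 0"
  shows "(\<Sum>c\<in>{c. 0 < c \<and> c dvd d \<and> c < d}. 1 / sqrt (real_of_int c)) \<le> inv_sqrt_divisor_sum (nat d)"
proof -
  have "{c. 0 < c \<and> c dvd d \<and> c < d} \<subseteq> int ` {c. c dvd nat d}"
  proof
    fix c assume "c \<in> {c. 0 < c \<and> c dvd d \<and> c < d}"
    then have "c = int (nat c)" "nat c dvd nat d"
      by (simp_all add: nat_dvd_iff)
    then show "c \<in> int ` {c. c dvd nat d}"
      by blast
  qed
  moreover have "finite {c. c dvd nat d}"
    using assms by simp
  ultimately have "(\<Sum>c\<in>{c. 0 < c \<and> c dvd d \<and> c < d}. 1 / sqrt (real_of_int c))
      \<le> (\<Sum>c\<in>int ` {c. c dvd nat d}. 1 / sqrt (real_of_int c))"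
    by (intro sum_mono2) auto
  also have "\<dots> = inv_sqrt_divisor_sum (nat d)"
    by (simp add: inv_sqrt_divisor_sum_def sum.reindex)
  finally show ?thesis .
qed

lemma bij_betw_mult_divisors_coprime:
  fixes a b :: nat
  assumes "coprime a b" "a > 0"
  shows "bij_betw (\<lambda>(x, y). x * y) ({x. x dvd a} \<times> {y. y dvd b}) {z. z dvd a * b}"
proof (rule bij_betwI')
  fix p q
  assume "p \<in> {x. x dvd a} \<times> {y. y dvd b}" "q \<in> {x. x dvd a} \<times> {y. y dvd b}"
  then obtain x1 y1 x2 y2 where pq: "p = (x1, y1)" "q = (x2, y2)"
    and dvd: "x1 dvd a" "y1 dvd b" "x2 dvd a" "y2 dvd b"
    by auto
  show "((\<lambda>(x, y). x * y) p = (\<lambda>(x, y). x * y) q) = (p = q)"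
  proof
    assume "(\<lambda>(x, y). x * y) p = (\<lambda>(x, y). x * y) q"
    then have e: "x1 * y1 = x2 * y2"
      using pq by simp
    have "coprime x1 y2" "coprime x2 y1"
      using dvd assms(1) by (meson coprime_divisors)+
    then have "x1 dvd x2" "x2 dvd x1"
      using e by (metis coprime_dvd_mult_left_iff dvd_triv_left)+
    then have "x1 = x2"
      by (rule dvd_antisym)
    moreover have "x1 > 0"
      using dvd assms by (metis dvd_0_left_iff gr0I)
    ultimately show "p = q"
      using e pq by simp
  qed simp
next
  fix p assume "p \<in> {x. x dvd a} \<times> {y. y dvd b}"
  then show "(\<lambda>(x, y). x * y) p \<in> {z. z dvd a * b}"
    by (auto intro: mult_dvd_mono)
next
  fix z assume "z \<in> {z. z dvd a * b}"
  then obtain x y where "z = x * y" "x dvd a" "y dvd b"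
    using division_decomp by blast
  then show "\<exists>p\<in>{x. x dvd a} \<times> {y. y dvd b}. z = (\<lambda>(x, y). x * y) p"
    by auto
qed

lemma inv_sqrt_divisor_sum_mult:
  assumes "coprime a b" "a > 0"
  shows "inv_sqrt_divisor_sum (a * b) = inv_sqrt_divisor_sum a * inv_sqrt_divisor_sum b"
proof -
  let ?f = "\<lambda>c::nat. 1 / sqrt (real c)"
  have "inv_sqrt_divisor_sum (a * b) = (\<Sum>p\<in>{x. x dvd a} \<times> {y. y dvd b}. ?f ((\<lambda>(x, y). x * y) p))"
    unfolding inv_sqrt_divisor_sum_def
    using bij_betw_mult_divisors_coprime[OF assms] by (rule sum.reindex_bij_betw[symmetric])
  also have "\<dots> = (\<Sum>x\<in>{x. x dvd a}. \<Sum>y\<in>{y. y dvd b}. ?f x * ?f y)"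
    by (simp add: sum.cartesian_product case_prod_beta real_sqrt_mult)
  also have "\<dots> = inv_sqrt_divisor_sum a * inv_sqrt_divisor_sum b"
    by (simp add: inv_sqrt_divisor_sum_def sum_product)
  finally show ?thesis .
qed

lemma inv_sqrt_divisor_sum_prime_power_le_7_div_2:
  assumes p: "prime p"
  shows "inv_sqrt_divisor_sum (p ^ a) \<le> 7 / 2"
proof -
  have p2: "p \<ge> 2"
    using p prime_ge_2_nat by blast
  define r where "r = 1 / sqrt (real p)"
  have "sqrt 2 > (1.41::real)"
    by (rule real_less_rsqrt) (simp add: power2_eq_square)
  moreover have "sqrt (real p) \<ge> sqrt 2"
    using p2 by simp
  ultimately have "1.41 < sqrt (real p)"
    by linarith
  then have "1 / sqrt (real p) < 1 / 1.41"
    using p2 by (intro divide_strict_left_mono) auto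
  then have r: "0 \<le> r" "r < 0.71"
    by (simp_all add: r_def)
  have "{x. x dvd p ^ a} = (\<lambda>i. p ^ i) ` {..a}"
    using divides_primepow_nat[OF p] by auto
  moreover have "inj_on (\<lambda>i. p ^ i) {..a}"
    using p2 by (auto intro!: inj_onI simp: power_inject_exp)
  ultimately have "inv_sqrt_divisor_sum (p ^ a) = (\<Sum>i\<le>a. r ^ i)"
    by (simp add: inv_sqrt_divisor_sum_def sum.reindex r_def real_sqrt_power power_one_over)
  also have "\<dots> = (1 - r ^ Suc a) / (1 - r)"
    using sum_gp_strict[of r "Suc a"] r by (simp add: lessThan_Suc_atMost)
  also have "\<dots> \<le> 1 / (1 - r)"
    using r by (intro divide_right_mono) auto
  also have "\<dots> \<le> 7 / 2"
    using r by (simp add: field_simps)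
  finally show ?thesis .
qed

lemma prime_power_le_2_totient:
  assumes p: "prime p" and a: "a > 0"
  shows "p ^ a \<le> 2 * totient (p ^ a)"
proof -
  have "p ^ a = p ^ (a - 1) * p"
    using a by (cases a) auto
  also have "\<dots> \<le> p ^ (a - 1) * (2 * (p - 1))"
    using prime_ge_2_nat[OF p] by (intro mult_left_mono) auto
  also have "\<dots> = 2 * totient (p ^ a)"
    using totient_prime_power[OF p a] by simp
  finally show ?thesis .
qed

lemma inv_sqrt_divisor_sum_prime_power_le:
  assumes "prime p" "a > 0"
  shows "inv_sqrt_divisor_sum (p ^ a) * real (p ^ a) \<le> 7 * real (totient (p ^ a))"
proof -
  have "real (p ^ a) \<le> real (2 * totient (p ^ a))"
    using prime_power_le_2_totient[OF assms] by (rule of_nat_mono)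
  then have "inv_sqrt_divisor_sum (p ^ a) * real (p ^ a) \<le> 7 / 2 * (2 * real (totient (p ^ a)))"
    using inv_sqrt_divisor_sum_prime_power_le_7_div_2[OF assms(1)]
    by (intro mult_mono) (auto simp: inv_sqrt_divisor_sum_nonneg)
  then show ?thesis
    by simp
qed

text \<open>For primes \<open>p \<ge> 7\<^sup>4\<close> the factor 7 is absorbed by \<open>(p\<^sup>a)\<^sup>1\<^sup>/\<^sup>4\<close>.\<close>

lemma inv_sqrt_divisor_sum_prime_power_le_powr:
  assumes p: "prime p" and a: "a > 0"
  shows "inv_sqrt_divisor_sum (p ^ a) * real (p ^ a)
           \<le> (if p < 2401 then 7 else 1) * real (p ^ a) powr (1/4) * real (totient (p ^ a))"
proof (cases "p < 2401")
  case True
  have "real (p ^ a) \<ge> 1"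
    using p prime_gt_0_nat by (simp add: Suc_leI)
  then have "real (p ^ a) powr (1/4) \<ge> 1"
    by (rule ge_one_powr_ge_zero) simp
  then have "7 * real (totient (p ^ a)) \<le> 7 * real (p ^ a) powr (1/4) * real (totient (p ^ a))"
    by (simp add: mult_right_mono)
  then show ?thesis
    using inv_sqrt_divisor_sum_prime_power_le[OF assms] True by simp
next
  case False
  have "2401 \<le> p ^ a"
    using False a prime_ge_1_nat[OF p] self_le_power[of p a] by simp
  then have "(2401::real) \<le> real (p ^ a)"
    by (metis of_nat_le_iff of_nat_numeral)
  then have "real (p ^ a) powr (1/4) \<ge> 2401 powr (1/4)"
    by (intro powr_mono2) simp_all
  moreover have "(2401::real) powr (1/4) = 7"
    using powr_powr[of 7 4 "1/4"] by simp
  ultimately have "7 * real (totient (p ^ a)) \<le> real (p ^ a) powr (1/4) * real (totient (p ^ a))"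
    by (intro mult_right_mono) auto
  then have "inv_sqrt_divisor_sum (p ^ a) * real (p ^ a) \<le> real (p ^ a) powr (1/4) * real (totient (p ^ a))"
    using inv_sqrt_divisor_sum_prime_power_le[OF assms] by linarith
  then show ?thesis
    using False by simp
qed

lemma prime_power_coprime_induct [consumes 1, case_names one prime_power_mult]:
  fixes n :: nat
  assumes "n > 0" and "P 1"
    and "\<And>p a r. prime p \<Longrightarrow> a > 0 \<Longrightarrow> r > 0 \<Longrightarrow> \<not> p dvd r \<Longrightarrow> P r \<Longrightarrow> P (p ^ a * r)"
  shows "P n"
  using assms(1)
proof (induction n rule: less_induct)
  case (less n)
  show ?case
  proof (cases "n = 1")
    case False
    then obtain p where p: "prime p" "p dvd n"
      using prime_factor_nat[of n] by auto
    define a where "a = multiplicity p n"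
    define r where "r = n div p ^ a"
    have a: "a > 0"
      using p less.prems by (simp add: a_def prime_multiplicity_gt_zero_iff)
    have n: "n = p ^ a * r"
      by (simp add: r_def a_def multiplicity_dvd)
    have "\<not> p dvd r"
      using multiplicity_decompose[of n p] less.prems p prime_gt_1_nat[of p]
      by (simp add: r_def a_def)
    have "r > 0"
      using n less.prems by (auto intro: gr0I)
    moreover have "r < n"
      using n \<open>r > 0\<close> one_less_power[OF prime_gt_1_nat[OF p(1)] a] by simp
    ultimately show ?thesis
      using assms(3)[OF p(1) a \<open>r > 0\<close> \<open>\<not> p dvd r\<close>] less.IH n by simp
  qed (use assms(2) in simp)
qed

lemma inv_sqrt_divisor_sum_le_small_primes:
  fixes n :: nat
  assumes "n > 0"
  shows "inv_sqrt_divisor_sum n * real n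
           \<le> 7 ^ card {p \<in> prime_factors n. p < 2401} * real n powr (1/4) * real (totient n)"
  using assms
proof (induction n rule: prime_power_coprime_induct)
  case one
  have "{c. c dvd (1::nat)} = {1}"
    by auto
  then show ?case
    by (simp add: inv_sqrt_divisor_sum_def)
next
  case (prime_power_mult p a r)
  define c :: real where "c = (if p < 2401 then 7 else 1)"
  have "prime_factors (p ^ a * r) = insert p (prime_factors r)" "p \<notin> prime_factors r"
    using prime_power_mult by (auto simp: prime_factors_product prime_factors_power prime_prime_factors)
  then have "{q \<in> prime_factors (p ^ a * r). q < 2401}
      = (if p < 2401 then insert p else id) {q \<in> prime_factors r. q < 2401}"
    by auto
  then have small: "(7::real) ^ card {q \<in> prime_factors (p ^ a * r). q < 2401}
      = c * 7 ^ card {q \<in> prime_factors r. q < 2401}"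
    using \<open>p \<notin> prime_factors r\<close> by (simp add: c_def)
  have "coprime (p ^ a) r"
    using prime_power_mult by (simp add: prime_imp_coprime)
  then have "inv_sqrt_divisor_sum (p ^ a * r) * real (p ^ a * r)
      = (inv_sqrt_divisor_sum (p ^ a) * real (p ^ a)) * (inv_sqrt_divisor_sum r * real r)"
    using prime_power_mult by (simp add: inv_sqrt_divisor_sum_mult prime_gt_0_nat)
  also have "\<dots> \<le> (c * real (p ^ a) powr (1/4) * real (totient (p ^ a)))
      * (7 ^ card {q \<in> prime_factors r. q < 2401} * real r powr (1/4) * real (totient r))"
    using inv_sqrt_divisor_sum_prime_power_le_powr[of p a] prime_power_mult
    by (intro mult_mono[of _ _ "inv_sqrt_divisor_sum r * real r"])
      (auto simp: c_def inv_sqrt_divisor_sum_nonneg)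
  also have "\<dots> = 7 ^ card {q \<in> prime_factors (p ^ a * r). q < 2401}
      * real (p ^ a * r) powr (1/4) * real (totient (p ^ a * r))"
    using \<open>coprime (p ^ a) r\<close> small by (simp add: powr_mult totient_mult_coprime)
  finally show ?case .
qed

lemma inv_sqrt_divisor_sum_le:
  obtains K :: real where "K > 0"
    and "\<And>n. n > 0 \<Longrightarrow> inv_sqrt_divisor_sum n * real n \<le> K * real n powr (1/4) * real (totient n)"
proof
  define K :: real where "K = 7 ^ 2401"
  show "K > 0"
    unfolding K_def by (rule zero_less_power) simp
  fix n :: nat assume "n > 0"
  have "card {p \<in> prime_factors n. p < 2401} \<le> card {..<(2401::nat)}"
    by (intro card_mono) auto
  then have "(7::real) ^ card {p \<in> prime_factors n. p < 2401} \<le> K"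
    unfolding K_def by (intro power_increasing) auto
  then show "inv_sqrt_divisor_sum n * real n \<le> K * real n powr (1/4) * real (totient n)"
    using inv_sqrt_divisor_sum_le_small_primes[OF \<open>n > 0\<close>] by (meson mult_right_mono order_trans
      mult_nonneg_nonneg of_nat_0_le_iff powr_ge_zero)
qed

lemma sqrt_mult_inv_sqrt_divisor_sum_le:
  obtains K :: real where "K > 0"
    and "\<And>d. d > 0 \<Longrightarrow> real d * sqrt (real d) * inv_sqrt_divisor_sum d \<le> K * real d powr (3/4) * real (totient d)"
proof -
  obtain K where "K > 0" and K: "\<And>n. n > 0 \<Longrightarrow>
      inv_sqrt_divisor_sum n * real n \<le> K * real n powr (1/4) * real (totient n)"
    using inv_sqrt_divisor_sum_le by blast
  have "real d * sqrt (real d) * inv_sqrt_divisor_sum d \<le> K * real d powr (3/4) * real (totient d)"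
    if "d > 0" for d
  proof -
    have "sqrt (real d) * real d powr (1/4) = real d powr (3/4)"
      by (simp add: powr_half_sqrt[symmetric] powr_add[symmetric])
    moreover have "sqrt (real d) * (inv_sqrt_divisor_sum d * real d)
        \<le> sqrt (real d) * (K * real d powr (1/4) * real (totient d))"
      using K[OF that] by (rule mult_left_mono) simp
    ultimately show ?thesis
      by (simp add: mult_ac)
  qed
  with \<open>K > 0\<close> show ?thesis
    using that by blast
qed

section \<open>Residue sets invariant under multiplication by units\<close>

text \<open>A set \<open>C\<close> of least residues mod \<open>d\<close> that is invariant under multiplication by the units in
  \<open>H\<close>, with \<open>card C = card H\<close>: all that the counting argument uses of a coset of \<open>H\<close>.\<close>

locale mult_invariant_residues =
  fixes d :: int and H C :: "int set"
  assumes modulus_gt_1: "d > 1"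
    and C_subset: "C \<subseteq> {0..<d}" and H_subset: "H \<subseteq> {0..<d}"
    and card_C: "card C = card H" and H_nonempty: "H \<noteq> {}"
    and mult_closed: "\<And>u x. u \<in> H \<Longrightarrow> x \<in> C \<Longrightarrow> (u * x) mod d \<in> C"
    and H_coprime: "\<And>u. u \<in> H \<Longrightarrow> coprime u d"
begin

lemma finite_C: "finite C"
  using C_subset by (rule finite_subset) simp

lemma finite_H: "finite H"
  using H_subset by (rule finite_subset) simp

lemma exp_sum_mult_invariant:
  assumes u: "u \<in> H"
  shows "exp_sum d C (b * u) = exp_sum d C b"
proof -
  define f where "f x = (u * x) mod d" for x
  have inj: "inj_on f C"
  proof (rule inj_onI)
    fix x y assume "x \<in> C" "y \<in> C" "f x = f y"
    then have "[x = y] (mod d)"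
      using H_coprime[OF u] by (simp add: f_def cong_def[symmetric] cong_mult_lcancel)
    moreover have "x mod d = x" "y mod d = y"
      using \<open>x \<in> C\<close> \<open>y \<in> C\<close> C_subset by (auto intro: mod_pos_pos_trivial)
    ultimately show "x = y"
      by (simp add: cong_def)
  qed
  moreover have "f ` C \<subseteq> C"
    using mult_closed[OF u] by (auto simp: f_def)
  ultimately have "f ` C = C"
    using finite_C by (intro card_subset_eq) (auto simp: card_image)
  have "exp_sum d C (b * u) = (\<Sum>x\<in>C. add_char d (b * f x))"
    unfolding exp_sum_def f_def using modulus_gt_1
    by (intro sum.cong refl add_char_cong) (auto simp: mod_mult_right_eq mult.assoc)
  also have "\<dots> = (\<Sum>y\<in>f ` C. add_char d (b * y))"
    by (simp add: sum.reindex[OF inj])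
  also have "\<dots> = exp_sum d C b"
    by (simp add: \<open>f ` C = C\<close> exp_sum_def)
  finally show ?thesis .
qed

text \<open>The sum is constant on the \<open>card H\<close> frequencies \<open>b * u\<close>, which meet each multiple of
  \<open>gcd b d\<close> at most \<open>gcd b d\<close> times; Parseval over these multiples does the rest.\<close>

lemma norm_exp_sum_sq_le:
  assumes b: "0 < b" "b < d"
  shows "(cmod (exp_sum d C b))\<^sup>2 \<le> real_of_int (d * gcd b d)"
proof -
  define c where "c = gcd b d"
  define m where "m = d div c"
  define w where "w t = (cmod (exp_sum d C t))\<^sup>2" for t
  have c: "c > 0" and dm: "d = c * m"
    using b by (simp_all add: c_def m_def)
  have "0 < c * m"
    using modulus_gt_1 by (simp add: dm)
  then have m: "m > 0"
    using c by (simp add: zero_less_mult_iff)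
  have "real (card H) * w b = (\<Sum>u\<in>H. w ((b * u) mod d))"
    using modulus_gt_1 by (simp add: w_def exp_sum_mod exp_sum_mult_invariant)
  also have "\<dots> \<le> real_of_int c * (\<Sum>t\<in>(\<lambda>s. c * s) ` {0..<m}. w t)"
  proof (rule sum_fibers_le)
    show "(\<lambda>u. (b * u) mod d) ` H \<subseteq> (\<lambda>s. c * s) ` {0..<m}"
      using modulus_gt_1 mult_mod_in_gcd_multiples by (auto simp: c_def m_def)
    fix t
    have "card {u\<in>H. (b * u) mod d = t} \<le> nat c"
      using card_mult_mod_fiber_le[of d b H t] modulus_gt_1 b H_subset by (simp add: c_def)
    then have "real (card {u\<in>H. (b * u) mod d = t}) \<le> real (nat c)"
      by (rule of_nat_mono)
    then show "real (card {u\<in>H. (b * u) mod d = t}) \<le> real_of_int c"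
      using c by simp
  qed (simp_all add: finite_H w_def)
  also have "(\<Sum>t\<in>(\<lambda>s. c * s) ` {0..<m}. w t) = (\<Sum>s\<in>{0..<m}. (cmod (exp_sum (c * m) C (c * s)))\<^sup>2)"
    using c by (subst sum.reindex) (auto simp: inj_on_def w_def dm)
  also have "\<dots> \<le> real_of_int m * (card C * nat c)"
    using c m finite_C C_subset by (intro exp_sum_parseval_le card_residue_class_le[where a = 0]) (auto simp: dm mult.commute)
  finally have "real (card H) * w b \<le> real (card H) * real_of_int (d * c)"
    using c by (simp add: card_C dm algebra_simps)
  moreover have "card H > 0"
    using finite_H H_nonempty by (simp add: card_gt_0_iff)
  ultimately show ?thesis
    by (simp add: w_def c_def)
qed

lemma error_term_le:
  assumes L: "L \<ge> 0"
  shows "(\<Sum>b\<in>{1..<d}. (cmod (exp_sum d {1..L} b))\<^sup>2 * cmod (exp_sum d C b))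
           \<le> real_of_int L * real_of_int d * sqrt (real_of_int d) * inv_sqrt_divisor_sum (nat d)"
proof -
  define G where "G = {c. 0 < c \<and> c dvd d \<and> c < d}"
  define v where "v b = (cmod (exp_sum d {1..L} b))\<^sup>2" for b
  have d: "d > 0"
    using modulus_gt_1 by simp
  have "(\<Sum>b\<in>{1..<d}. v b * cmod (exp_sum d C b))
      \<le> (\<Sum>b\<in>{1..<d}. sqrt (real_of_int (d * gcd b d)) * v b)"
  proof (intro sum_mono)
    fix b assume "b \<in> {1..<d}"
    then have norm_C: "cmod (exp_sum d C b) \<le> sqrt (real_of_int (d * gcd b d))"
      using norm_exp_sum_sq_le[of b] by (simp add: real_le_rsqrt del: of_int_mult)
    show "v b * cmod (exp_sum d C b) \<le> sqrt (real_of_int (d * gcd b d)) * v b"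
      using mult_left_mono[OF norm_C, of "v b"] by (simp add: v_def mult.commute)
  qed
  also have "\<dots> \<le> (\<Sum>c\<in>G. sqrt (real_of_int (d * c)) * (\<Sum>b\<in>{b\<in>{1..<d}. c dvd b}. v b))"
    unfolding G_def using d by (intro sum_gcd_le_sum_divisors) (simp_all add: v_def)
  also have "\<dots> \<le> (\<Sum>c\<in>G. sqrt (real_of_int (d * c)) * real_of_int (d div c * L))"
    using d L sum_exp_sum_interval_multiples_le
    by (intro sum_mono mult_left_mono) (auto simp: G_def v_def)
  also have "\<dots> = real_of_int L * real_of_int d * sqrt (real_of_int d) * (\<Sum>c\<in>G. 1 / sqrt (real_of_int c))"
    unfolding sum_distrib_left by (intro sum.cong refl sqrt_mult_mult_div_eq) (auto simp: G_def)
  also have "\<dots> \<le> real_of_int L * real_of_int d * sqrt (real_of_int d) * inv_sqrt_divisor_sum (nat d)"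
    unfolding G_def
    using L d sum_proper_divisors_le_inv_sqrt_divisor_sum[OF d] by (intro mult_left_mono) auto
  finally show ?thesis
    by (simp add: v_def)
qed

lemma exists_pair_sum_in_C:
  assumes L: "L \<ge> 1"
    and big: "real_of_int d * sqrt (real_of_int d) * inv_sqrt_divisor_sum (nat d) < real_of_int L * card C"
  shows "\<exists>x\<in>{1..L}. \<exists>y\<in>{1..L}. (x + y) mod d \<in> C"
proof -
  define P where "P = {(x, y)\<in>{1..L} \<times> {1..L}. (x + y) mod d \<in> C}"
  define R where "R = (\<Sum>b\<in>{1..<d}. exp_sum d {1..L} b ^ 2 * cnj (exp_sum d C b))"
  have "{0..<d} = insert 0 {1..<d}"
    using modulus_gt_1 by auto
  then have "of_int d * of_nat (card P) = (of_int L)\<^sup>2 * of_nat (card C) + R"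
    using sum_exp_sum_sq_cnj[of d "{1..L}" C] modulus_gt_1 C_subset L
    by (simp add: P_def R_def exp_sum_0)
  then have "Re (of_int d * of_nat (card P)) = Re ((of_int L)\<^sup>2 * of_nat (card C) + R)"
    by (rule arg_cong)
  then have "real_of_int d * card P = (real_of_int L)\<^sup>2 * card C + Re R"
    by simp
  moreover have "norm R \<le> real_of_int L * real_of_int d * sqrt (real_of_int d) * inv_sqrt_divisor_sum (nat d)"
    unfolding R_def
    using error_term_le L by (intro order_trans[OF norm_sum]) (simp add: norm_mult norm_power)
  moreover have "- norm R \<le> Re R"
    using abs_Re_le_cmod[of R] by linarith
  ultimately have "real_of_int L * (real_of_int L * card C
      - real_of_int d * sqrt (real_of_int d) * inv_sqrt_divisor_sum (nat d)) \<le> real_of_int d * card P"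
    by (simp add: algebra_simps power2_eq_square)
  moreover have "0 < real_of_int L * (real_of_int L * card C
      - real_of_int d * sqrt (real_of_int d) * inv_sqrt_divisor_sum (nat d))"
    using big L by simp
  ultimately have "card P \<noteq> 0"
    by (metis of_nat_0 mult_zero_right not_le)
  then obtain p where "p \<in> P"
    by (metis card.empty ex_in_conv)
  then obtain x y where "x \<in> {1..L}" "y \<in> {1..L}" "(x + y) mod d \<in> C"
    by (auto simp: P_def)
  then show ?thesis
    by blast
qed
end

section \<open>Cosets in the unit group\<close>

context
  fixes d :: nat
  assumes d: "d > 1"
begin

interpretation residues "int d" "residue_ring (int d)"
  using d by unfold_locales auto

interpretation units: group "units_mod d"
  by (rule units_group)

lemma carrier_units_mod: "carrier (units_mod d) = {x. 0 < x \<and> x < int d \<and> coprime x (int d)}"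
  by (simp add: units_of_carrier res_units_eq)

lemma card_rcoset_mult_index_units_mod:
  assumes "subgroup H (units_mod d)" "C \<in> rcosets\<^bsub>units_mod d\<^esub> H"
  shows "card C * card (rcosets\<^bsub>units_mod d\<^esub> H) = totient d"
  using units.lagrange[OF assms(1)] units.card_rcosets_equal[OF assms(2) subgroup.subset[OF assms(1)]]
    totient_eq
  by (simp add: order_def units_of_carrier mult.commute)

lemma mult_invariant_residues_rcoset:
  assumes H: "subgroup H (units_mod d)" and C: "C \<in> rcosets\<^bsub>units_mod d\<^esub> H"
  shows "mult_invariant_residues (int d) H C"
proof
  have H_carrier: "H \<subseteq> carrier (units_mod d)"
    using H by (rule subgroup.subset)
  from C obtain a where a: "a \<in> carrier (units_mod d)" and Ca: "C = H #>\<^bsub>units_mod d\<^esub> a"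
    unfolding RCOSETS_def by auto
  have "C \<subseteq> carrier (units_mod d)"
    unfolding Ca using H_carrier a by (rule units.r_coset_subset_G)
  then show "C \<subseteq> {0..<int d}"
    by (auto simp: carrier_units_mod)
  show "H \<subseteq> {0..<int d}" "\<And>u. u \<in> H \<Longrightarrow> coprime u (int d)"
    using H_carrier by (auto simp: carrier_units_mod)
  show "card C = card H"
    using units.card_rcosets_equal[OF C H_carrier] by simp
  show "H \<noteq> {}"
    using subgroup.one_closed[OF H] by auto
  show "int d > 1"
    using d by simp
  fix u x assume u: "u \<in> H" and x: "x \<in> C"
  then obtain h where h: "h \<in> H" and xh: "x = h \<otimes>\<^bsub>units_mod d\<^esub> a"
    unfolding Ca r_coset_def by auto
  have "u \<otimes>\<^bsub>units_mod d\<^esub> x = (u \<otimes>\<^bsub>units_mod d\<^esub> h) \<otimes>\<^bsub>units_mod d\<^esub> a"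
    using xh u h H_carrier a by (simp add: units.m_assoc subsetD)
  moreover have "u \<otimes>\<^bsub>units_mod d\<^esub> h \<in> H"
    using H u h by (rule subgroup.m_closed)
  ultimately have "u \<otimes>\<^bsub>units_mod d\<^esub> x \<in> C"
    unfolding Ca r_coset_def by auto
  then show "(u * x) mod int d \<in> C"
    by (simp add: units_of_mult residue_ring_def)
qed

lemma rcoset_units_mod_has_small_element:
  assumes H: "subgroup H (units_mod d)" and C: "C \<in> rcosets\<^bsub>units_mod d\<^esub> H"
    and L: "L \<ge> 1" "2 * L < int d"
    and big: "real d * sqrt (real d) * inv_sqrt_divisor_sum d * card (rcosets\<^bsub>units_mod d\<^esub> H)
                < real_of_int L * totient d"
  shows "\<exists>a\<in>C. 0 < a \<and> a \<le> 2 * L"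
proof -
  interpret mult_invariant_residues "int d" H C
    using H C by (rule mult_invariant_residues_rcoset)
  have "real d * sqrt (real d) * inv_sqrt_divisor_sum d * card (rcosets\<^bsub>units_mod d\<^esub> H)
      < real_of_int L * card C * card (rcosets\<^bsub>units_mod d\<^esub> H)"
    using big by (simp add: card_rcoset_mult_index_units_mod[OF H C, symmetric] mult.assoc)
  then have "real d * sqrt (real d) * inv_sqrt_divisor_sum d < real_of_int L * card C"
    by (rule mult_right_less_imp_less) simp
  then have "\<exists>x\<in>{1..L}. \<exists>y\<in>{1..L}. (x + y) mod int d \<in> C"
    by (intro exists_pair_sum_in_C L(1)) simp
  then obtain x y where "x \<in> {1..L}" "y \<in> {1..L}" "(x + y) mod int d \<in> C"
    by blast
  moreover have "(x + y) mod int d = x + y"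
    using \<open>x \<in> {1..L}\<close> \<open>y \<in> {1..L}\<close> L(2) by simp
  ultimately show ?thesis
    by (intro bexI[of _ "x + y"]) auto
qed

end

lemma powr_three_quarters_lt_div:
  fixes d :: nat and m :: int and c :: real
  assumes m: "m > 0" and c: "c \<ge> 0" and d: "real d \<ge> (m * (c + 1)) ^ 4"
  shows "c * real d powr (3/4) < of_int (int d div m)"
proof -
  define q where "q = real d powr (1/4)"
  have "m * (c + 1) \<ge> 1"
    using m c by (simp add: mult_ge1_I)
  then have "real d \<ge> 1"
    using d one_le_power[of "m * (c + 1)" 4] by linarith
  then have q4: "q ^ 4 = real d" and q3: "q ^ 3 = real d powr (3/4)"
    by (simp_all add: q_def powr_realpow[symmetric] powr_powr)
  have "(m * (c + 1)) ^ 4 \<le> q ^ 4"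
    using d by (simp only: q4)
  moreover have "q \<ge> 0"
    by (simp add: q_def)
  ultimately have "q \<ge> m * (c + 1)"
    using power_le_imp_le_base[of "m * (c + 1)" 3 q] by simp
  then have "q \<ge> 1"
    using \<open>m * (c + 1) \<ge> 1\<close> by linarith
  have "m * (c + 1) * q ^ 3 \<le> q * q ^ 3"
    using \<open>q \<ge> m * (c + 1)\<close> \<open>q \<ge> 1\<close> by (intro mult_right_mono) auto
  then have "(c + 1) * q ^ 3 \<le> real d / m"
    using m q4 by (simp add: field_simps power_numeral_reduce)
  moreover have "q ^ 3 \<ge> 1"
    using \<open>q \<ge> 1\<close> by simp
  moreover have "real d / m - 1 < of_int (int d div m)"
  proof -
    have "\<lfloor>real d / real_of_int m\<rfloor> = int d div m"
      using floor_divide_of_int_eq[of "int d" m] by simp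
    then show ?thesis
      using floor_correct[of "real d / m"] by linarith
  qed
  ultimately show ?thesis
    using c by (simp add: q3[symmetric] algebra_simps)
qed

lemma double_div_odd_lt:
  fixes d n :: nat
  assumes n: "n > 0" and L: "L = int d div (2 * int n + 1)" "L \<ge> 1"
  shows "2 * L < int d" "real_of_int (2 * L) < real d / real n"
proof -
  have "0 \<le> int d mod (2 * int n + 1)"
    by simp
  then have "(2 * int n + 1) * L \<le> int d"
    using mult_div_mod_eq[of "2 * int n + 1" "int d"] unfolding L(1) by linarith
  then have "2 * (L * int n) + L \<le> int d"
    by (simp add: algebra_simps)
  moreover have "L \<le> L * int n"
    using L(2) n by simp
  ultimately show "2 * L < int d"
    using L(2) by linarith
  have "2 * (L * int n) < int d"
    using \<open>2 * (L * int n) + L \<le> int d\<close> L(2) by linarith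
  then have "real_of_int (2 * (L * int n)) < real_of_int (int d)"
    by (simp only: of_int_less_iff)
  then show "real_of_int (2 * L) < real d / real n"
    using n by (simp add: field_simps)
qed

lemma rcoset_units_mod_meets_interval:
  fixes d n :: nat
  assumes big: "real d * sqrt (real d) * inv_sqrt_divisor_sum d * card (rcosets\<^bsub>units_mod d\<^esub> H)
                  < real_of_int (int d div (2 * int n + 1)) * totient d"
    and n: "n > 0" and H: "subgroup H (units_mod d)" and C: "C \<in> rcosets\<^bsub>units_mod d\<^esub> H"
  shows "\<exists>a\<in>C. 0 < a \<and> real_of_int a < real d / real n"
proof -
  define L where "L = int d div (2 * int n + 1)"
  have "0 \<le> real d * sqrt (real d) * inv_sqrt_divisor_sum d * card (rcosets\<^bsub>units_mod d\<^esub> H)"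
    by (simp add: inv_sqrt_divisor_sum_nonneg)
  then have "0 < real_of_int L * totient d"
    using big by (simp add: L_def)
  then have "L \<ge> 1"
    by (simp add: zero_less_mult_iff)
  then have L: "2 * L < int d" "real_of_int (2 * L) < real d / real n"
    using double_div_odd_lt[OF n L_def] by simp_all
  then have "d > 1"
    using \<open>L \<ge> 1\<close> by linarith
  then obtain a where "a \<in> C" "0 < a" "a \<le> 2 * L"
    using rcoset_units_mod_has_small_element[OF _ H C \<open>L \<ge> 1\<close> L(1)] big by (auto simp: L_def)
  then show ?thesis
    using L(2) by (intro bexI[of _ a]) auto
qed

theorem proposition5p1:
  fixes n g :: nat
  assumes "n > 0" and "g > 0"
  shows "\<exists>d0::nat. \<forall>d::nat. d > d0 \<longrightarrow>
           (\<forall>H. subgroup H (units_mod d) \<and> card (rcosets\<^bsub>units_mod d\<^esub> H) = 2 * g \<longrightarrow>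
              (\<forall>C \<in> rcosets\<^bsub>units_mod d\<^esub> H.
                 \<exists>a \<in> C. 0 < a \<and> real_of_int a < real d / real n))"
proof -
  obtain K where "K > 0" and K: "\<And>d. d > 0 \<Longrightarrow>
      real d * sqrt (real d) * inv_sqrt_divisor_sum d \<le> K * real d powr (3/4) * real (totient d)"
    using sqrt_mult_inv_sqrt_divisor_sum_le by blast
  define m :: int where "m = 2 * int n + 1"
  show ?thesis
  proof (intro exI[of _ "nat \<lceil>(m * (2 * g * K + 1)) ^ 4\<rceil>"] allI impI ballI, elim conjE)
    fix d :: nat and H C
    assume "nat \<lceil>(m * (2 * g * K + 1)) ^ 4\<rceil> < d" and H: "subgroup H (units_mod d)"
      and index: "card (rcosets\<^bsub>units_mod d\<^esub> H) = 2 * g" and C: "C \<in> rcosets\<^bsub>units_mod d\<^esub> H"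
    then have "(m * (2 * g * K + 1)) ^ 4 \<le> real d" "d > 0"
      by linarith+
    have "real d * sqrt (real d) * inv_sqrt_divisor_sum d * card (rcosets\<^bsub>units_mod d\<^esub> H)
        \<le> 2 * g * K * real d powr (3/4) * totient d"
      using mult_right_mono[OF K[of d], of "2 * real g"] \<open>d > 0\<close> index by (simp add: mult_ac)
    also have "\<dots> < real_of_int (int d div m) * totient d"
      using powr_three_quarters_lt_div[OF _ _ \<open>(m * (2 * g * K + 1)) ^ 4 \<le> real d\<close>] \<open>K > 0\<close> \<open>d > 0\<close>
      by (intro mult_strict_right_mono) (simp_all add: m_def)
    finally show "\<exists>a\<in>C. 0 < a \<and> real_of_int a < real d / real n"
      unfolding m_def using \<open>n > 0\<close> H C by (rule rcoset_units_mod_meets_interval)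
  qed
qed

end
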